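(* Let $m\in\mathbb{Z}_{\ge0}$ and, in $\mathbb{R}^{2m+6}$, let $\rho=\frac12\sum_re_r$, $v_S=\sum_{r\in S}e_r$ ($S\subset\{0,\ldots,2m+5\}$, $|S|=m+1$), $w_{ij}=\rho-e_i-e_j$, $P^{(m)}=\mathrm{conv}\{v_S,w_{ij}\}$, $P_{\rm I}=\mathrm{conv}\{v_S\}$, $P_{\rm II}=\mathrm{conv}(\{v_S:S\subset\{1,\ldots,2m+5\}\}\cup\{w_{0j}:1\le j\le 2m+5\})$, $P_{\rm III}=\mathrm{conv}(\{v_S:S\subset\{3,\ldots,2m+5\}\}\cup\{w_{ij}:0\le i<j\le 2\})$. Then every face of $P^{(m)}$ is a face of $P_{\rm I}$, of $\sigma(P_{\rm II})$ or of $\sigma(P_{\rm III})$ for some coordinate permutation $\sigma\in S_{2m+6}$, except for the interior of $P^{(m)}$ and the images under coordinate permutations of the facet of $P^{(m)}$ given by $\alpha_0+\alpha_1+\alpha_2+\alpha_3=0$. *)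

theory Defs
  imports "HOL-Analysis.Analysis" "HOL-Combinatorics.Permutations"
begin

text \<open>Coordinates of R^(2m+6) are the elements of a finite type 'n with CARD('n) = 2m+6;
  the labelling 0,...,2m+5 of the coordinates is given by a bijection idx from {0..<2m+6} onto 'n.\<close>

definition unitv :: "(nat \<Rightarrow> 'n::finite) \<Rightarrow> nat \<Rightarrow> real ^ 'n" where
  "unitv idx r = axis (idx r) 1"

definition rhov :: "real ^ 'n::finite" where
  "rhov = (\<Sum>k\<in>(UNIV::'n set). axis k 1) /\<^sub>R 2"

definition vS :: "(nat \<Rightarrow> 'n::finite) \<Rightarrow> nat set \<Rightarrow> real ^ 'n" where
  "vS idx S = (\<Sum>r\<in>S. unitv idx r)"

definition wv :: "(nat \<Rightarrow> 'n::finite) \<Rightarrow> nat \<Rightarrow> nat \<Rightarrow> real ^ 'n" where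
  "wv idx i j = rhov - unitv idx i - unitv idx j"

definition Pm :: "nat \<Rightarrow> (nat \<Rightarrow> 'n::finite) \<Rightarrow> (real ^ 'n) set" where
  "Pm m idx = convex hull
     ({vS idx S | S. S \<subseteq> {0..<2*m+6} \<and> card S = m+1}
      \<union> {wv idx i j | i j. i < j \<and> j < 2*m+6})"

definition PI :: "nat \<Rightarrow> (nat \<Rightarrow> 'n::finite) \<Rightarrow> (real ^ 'n) set" where
  "PI m idx = convex hull {vS idx S | S. S \<subseteq> {0..<2*m+6} \<and> card S = m+1}"

definition PII :: "nat \<Rightarrow> (nat \<Rightarrow> 'n::finite) \<Rightarrow> (real ^ 'n) set" where
  "PII m idx = convex hull
     ({vS idx S | S. S \<subseteq> {1..<2*m+6} \<and> card S = m+1}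
      \<union> {wv idx 0 j | j. 1 \<le> j \<and> j < 2*m+6})"

definition PIII :: "nat \<Rightarrow> (nat \<Rightarrow> 'n::finite) \<Rightarrow> (real ^ 'n) set" where
  "PIII m idx = convex hull
     ({vS idx S | S. S \<subseteq> {3..<2*m+6} \<and> card S = m+1}
      \<union> {wv idx i j | i j. i < j \<and> j \<le> 2})"

text \<open>Coordinate permutation: sends the unit vector at k to the unit vector at sigma k.\<close>
definition coordperm :: "('n::finite \<Rightarrow> 'n) \<Rightarrow> real ^ 'n \<Rightarrow> real ^ 'n" where
  "coordperm \<sigma> x = (\<chi> k. x $ inv \<sigma> k)"

definition Facet0 :: "nat \<Rightarrow> (nat \<Rightarrow> 'n::finite) \<Rightarrow> (real ^ 'n) set" where
  "Facet0 m idx = {x \<in> Pm m idx. x $ idx 0 + x $ idx 1 + x $ idx 2 + x $ idx 3 = 0}"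

end

theory Submission
  imports Defs
begin

text \<open>A nonempty proper face F of P^(m) is exposed: F = P^(m) \<inter> {x. <a, x> = b} for a functional
  with <a, x> \<le> b on P^(m), and F is the convex hull of the tight generators, the v_S and w_ij with
  <a, v_S> = b resp. <a, w_ij> = b. As F is proper, a is not constant. A tight w_ij minimises
  a_i + a_j, and exchanging one element of S shows that a tight v_S contains no coordinate at which a
  is minimal. Let M be the set of these minimal coordinates. If no w_ij is tight, F is a face of P_I.
  If |M| \<ge> 4, the complement of four points of M splits into two tight v_S, which forces a to be
  constant off these four points, and F is a coordinate permutation of the facet
  x_0 + x_1 + x_2 + x_3 = 0. If |M| = 3, every tight w_ij has i, j \<in> M; if |M| \<le> 2, all tight w_ij
  share one index z \<in> M. So the tight generators lie in a permuted copy of P_III resp. P_II, and F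
  is a face of it.\<close>

text \<open>indvec B and wvec p q are v_S and w_ij with the coordinates named by elements of 'n
  themselves, i.e. B = idx ` S and p, q = idx i, idx j.\<close>

definition indvec :: "'n::finite set \<Rightarrow> real ^ 'n" where
  "indvec B = (\<chi> k. if k \<in> B then 1 else 0)"

definition wvec :: "'n::finite \<Rightarrow> 'n \<Rightarrow> real ^ 'n" where
  "wvec p q = (\<chi> k. 1/2 - (if k = p then 1 else 0) - (if k = q then 1 else 0))"

definition pair_value :: "('n::finite \<Rightarrow> real) \<Rightarrow> 'n \<Rightarrow> 'n \<Rightarrow> real" where
  "pair_value \<alpha> p q = sum \<alpha> UNIV / 2 - \<alpha> p - \<alpha> q"

definition indvecs :: "nat \<Rightarrow> (real ^ 'n::finite) set" where
  "indvecs k = {indvec B | B. card B = k}"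

definition wvecs :: "(real ^ 'n::finite) set" where
  "wvecs = {wvec p q | p q. p \<noteq> q}"

definition PII_generators :: "nat \<Rightarrow> 'n::finite \<Rightarrow> (real ^ 'n) set" where
  "PII_generators m z = {indvec B | B. card B = m+1 \<and> z \<notin> B} \<union> {wvec z q | q. q \<noteq> z}"

definition PIII_generators :: "nat \<Rightarrow> 'n::finite set \<Rightarrow> (real ^ 'n) set" where
  "PIII_generators m Z =
     {indvec B | B. card B = m+1 \<and> B \<inter> Z = {}} \<union> {wvec p q | p q. p \<noteq> q \<and> p \<in> Z \<and> q \<in> Z}"

definition tight_points :: "nat \<Rightarrow> ('n::finite \<Rightarrow> real) \<Rightarrow> real \<Rightarrow> (real ^ 'n) set" where
  "tight_points m \<alpha> b =
     {indvec B | B. card B = m+1 \<and> sum \<alpha> B = b} \<union> {wvec p q | p q. p \<noteq> q \<and> pair_value \<alpha> p q = b}"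

lemma wvec_commute: "wvec p q = wvec q p"
  by (simp add: wvec_def vec_eq_iff)

lemma finite_indvecs: "finite (indvecs k)"
  by (rule finite_subset[of _ "range indvec"]) (auto simp: indvecs_def)

lemma finite_wvecs: "finite wvecs"
  by (rule finite_subset[of _ "range (case_prod wvec)"]) (auto simp: wvecs_def)

lemma inner_indvec: "a \<bullet> indvec B = sum (($) a) B"
  by (simp add: inner_vec_def indvec_def if_distrib sum.If_cases cong: if_cong)

lemma inner_wvec:
  assumes "p \<noteq> q"
  shows "a \<bullet> wvec p q = pair_value (($) a) p q"
proof -
  have "a \<bullet> wvec p q = (\<Sum>k\<in>UNIV. a $ k / 2 - (if k = p then a $ k else 0) - (if k = q then a $ k else 0))"
    unfolding inner_vec_def wvec_def by (intro sum.cong) (auto simp: algebra_simps)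
  also have "\<dots> = pair_value (($) a) p q"
    by (simp add: sum_subtractf sum_divide_distrib pair_value_def)
  finally show ?thesis .
qed

lemma card_Compl_finite: "card (- (A::'n::finite set)) = CARD('n) - card A"
  by (metis Compl_eq_Diff_UNIV card_Diff_subset finite top_greatest)

lemma sum_UNIV_split: "sum f (UNIV::'n::finite set) = sum f B + sum f (-B)"
  using sum.subset_diff[of B UNIV f] by (simp add: Compl_eq_Diff_UNIV add.commute)

lemma linear_coordperm: "linear (coordperm \<sigma>)"
  by (rule linearI) (simp_all add: coordperm_def vec_eq_iff)

lemma coordperm_indvec:
  assumes "\<sigma> permutes UNIV"
  shows "coordperm \<sigma> (indvec B) = indvec (\<sigma> ` B)"
proof -
  have "inv \<sigma> k \<in> B \<longleftrightarrow> k \<in> \<sigma> ` B" for k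
    by (metis assms image_iff permutes_inverses)
  then show ?thesis by (simp add: coordperm_def indvec_def vec_eq_iff)
qed

lemma coordperm_wvec:
  assumes "\<sigma> permutes UNIV"
  shows "coordperm \<sigma> (wvec p q) = wvec (\<sigma> p) (\<sigma> q)"
proof -
  have "inv \<sigma> k = x \<longleftrightarrow> k = \<sigma> x" for k x
    by (metis assms permutes_inverses)
  then show ?thesis by (simp add: coordperm_def wvec_def vec_eq_iff)
qed

lemma coordperm_inv_cancel: "\<sigma> permutes UNIV \<Longrightarrow> coordperm (inv \<sigma>) (coordperm \<sigma> x) = x"
  by (simp add: coordperm_def vec_eq_iff permutes_inv_inv permutes_inverses)

lemma sum_coordperm_image:
  assumes "\<sigma> permutes UNIV"
  shows "sum (($) (coordperm \<sigma> x)) (\<sigma> ` A) = sum (($) x) A"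
proof -
  have "inj_on \<sigma> A" using permutes_inj[OF assms] inj_on_subset by blast
  then show ?thesis by (simp add: sum.reindex coordperm_def permutes_inverses(2)[OF assms])
qed

lemma exists_permutes_image_eq:
  fixes A B :: "'n::finite set"
  assumes "card A = card B"
  shows "\<exists>\<sigma>. \<sigma> permutes UNIV \<and> \<sigma> ` A = B"
proof -
  obtain f where f: "bij_betw f A B" using finite_same_card_bij[OF _ _ assms] by auto
  have "card (-A) = card (-B)" using assms by (simp add: card_Compl_finite)
  then obtain g where g: "bij_betw g (-A) (-B)" using finite_same_card_bij[OF finite finite] by blast
  define \<sigma> where "\<sigma> x = (if x \<in> A then f x else g x)" for x
  have inside: "bij_betw \<sigma> A B" using f by (rule bij_betw_cong[THEN iffD1, rotated]) (simp add: \<sigma>_def)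
  have outside: "bij_betw \<sigma> (-A) (-B)" using g by (rule bij_betw_cong[THEN iffD1, rotated]) (simp add: \<sigma>_def)
  have "bij_betw \<sigma> (A \<union> -A) (B \<union> -B)" by (rule bij_betw_combine[OF inside outside]) auto
  then have "\<sigma> permutes UNIV" by (intro bij_imp_permutes) auto
  moreover have "\<sigma> ` A = B" using inside by (simp add: bij_betw_def)
  ultimately show ?thesis by blast
qed

lemma coordperm_PII_generators:
  assumes "\<tau> permutes UNIV"
  shows "coordperm \<tau> ` PII_generators m z \<subseteq> PII_generators m (\<tau> z)"
proof -
  have "inj \<tau>" using permutes_inj[OF assms] .
  then show ?thesis
    by (auto simp: PII_generators_def coordperm_indvec[OF assms] coordperm_wvec[OF assms]
        card_image inj_eq inj_on_subset)
qed

lemma coordperm_PIII_generators: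
  assumes "\<tau> permutes UNIV"
  shows "coordperm \<tau> ` PIII_generators m Z \<subseteq> PIII_generators m (\<tau> ` Z)"
proof
  have inj: "inj \<tau>" using permutes_inj[OF assms] .
  fix y assume "y \<in> coordperm \<tau> ` PIII_generators m Z"
  then consider B where "y = indvec (\<tau> ` B)" "card B = m+1" "B \<inter> Z = {}"
    | p q where "y = wvec (\<tau> p) (\<tau> q)" "p \<noteq> q" "p \<in> Z" "q \<in> Z"
    unfolding PIII_generators_def
    by (auto simp: coordperm_indvec[OF assms] coordperm_wvec[OF assms])
  then show "y \<in> PIII_generators m (\<tau> ` Z)"
  proof cases
    case 1
    then have "card (\<tau> ` B) = m+1" "\<tau> ` B \<inter> \<tau> ` Z = {}"
      using inj by (auto simp: card_image inj_on_subset inj_eq)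
    then show ?thesis using 1 unfolding PIII_generators_def by blast
  next
    case 2
    then have "\<tau> p \<noteq> \<tau> q" "\<tau> p \<in> \<tau> ` Z" "\<tau> q \<in> \<tau> ` Z"
      using inj by (auto simp: inj_eq)
    then show ?thesis using 2 unfolding PIII_generators_def by blast
  qed
qed

section \<open>The polytopes in unlabelled form\<close>

lemma vS_eq_indvec:
  assumes "inj_on idx S"
  shows "vS idx S = indvec (idx ` S)"
proof (cases "finite S")
  case True
  have "vS idx S $ k = (\<Sum>j\<in>idx ` S. axis j (1::real) $ k)" for k
    using sum.reindex[OF assms, of "\<lambda>j. axis j (1::real) $ k"]
    by (simp add: vS_def unitv_def sum_component comp_def)
  also have "\<dots> k = (\<Sum>j\<in>idx ` S. if k = j then 1 else 0)" for k
    by (simp add: axis_def eq_commute)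
  finally show ?thesis using True by (simp add: indvec_def vec_eq_iff)
next
  case False
  then have "infinite (idx ` S)" using assms finite_imageD by blast
  then show ?thesis using False by (simp add: vS_def indvec_def vec_eq_iff)
qed

lemma rhov_nth: "(rhov :: real ^ 'n::finite) $ k = 1/2"
  by (simp add: rhov_def axis_def if_distrib cong: if_cong)

lemma wv_eq_wvec: "wv idx i j = wvec (idx i) (idx j)"
  by (simp add: wv_def wvec_def vec_eq_iff rhov_nth unitv_def axis_def)

context
  fixes idx :: "nat \<Rightarrow> 'n::finite" and N :: nat
  assumes bij: "bij_betw idx {0..<N} UNIV"
begin

lemma vS_set_eq:
  assumes "A \<subseteq> {0..<N}"
  shows "{vS idx S | S. S \<subseteq> A \<and> card S = k} = {indvec B | B. B \<subseteq> idx ` A \<and> card B = k}"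
    (is "?L = ?R")
proof
  have inj: "inj_on idx S" if "S \<subseteq> A" for S
    using bij assms that by (meson bij_betw_def inj_on_subset)
  show "?L \<subseteq> ?R"
  proof
    fix x assume "x \<in> ?L"
    then obtain S where S: "x = vS idx S" "S \<subseteq> A" "card S = k" by blast
    then have "x = indvec (idx ` S)" "card (idx ` S) = k" "idx ` S \<subseteq> idx ` A"
      using inj[OF S(2)] by (auto simp: vS_eq_indvec card_image)
    then show "x \<in> ?R" by blast
  qed
  show "?R \<subseteq> ?L"
  proof
    fix x assume "x \<in> ?R"
    then obtain B where B: "x = indvec B" "B \<subseteq> idx ` A" "card B = k" by blast
    then obtain S where S: "S \<subseteq> A" "B = idx ` S" by (auto simp: subset_image_iff)
    then have "x = vS idx S" "card S = k" using B inj[OF S(1)] by (auto simp: vS_eq_indvec card_image)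
    then show "x \<in> ?L" using S(1) by blast
  qed
qed

lemma wv_set_eq:
  assumes "A \<subseteq> {0..<N}"
  shows "{wv idx i j | i j. i < j \<and> i \<in> A \<and> j \<in> A}
       = {wvec p q | p q. p \<noteq> q \<and> p \<in> idx ` A \<and> q \<in> idx ` A}" (is "?L = ?R")
proof
  have inj: "inj_on idx A" using bij assms by (meson bij_betw_def inj_on_subset)
  then show "?L \<subseteq> ?R" by (force simp: wv_eq_wvec inj_on_eq_iff)
  show "?R \<subseteq> ?L"
  proof
    fix x assume "x \<in> ?R"
    then obtain i j where ij: "x = wvec (idx i) (idx j)" "i \<noteq> j" "i \<in> A" "j \<in> A" by blast
    show "x \<in> ?L"
    proof (cases "i < j")
      case True
      then show ?thesis using ij by (auto simp: wv_eq_wvec)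
    next
      case False
      then have "x = wv idx j i" "j < i" using ij by (auto simp: wv_eq_wvec wvec_commute)
      then show ?thesis using ij by blast
    qed
  qed
qed

lemma bij_image_diff_eq_Compl:
  assumes "C \<subseteq> {0..<N}"
  shows "idx ` ({0..<N} - C) = - idx ` C"
proof -
  have "inj_on idx {0..<N}" "idx ` {0..<N} = UNIV" using bij by (simp_all add: bij_betw_def)
  then show ?thesis using inj_on_image_set_diff[of idx "{0..<N}" "{0..<N}" C] assms by auto
qed

end

lemma Pm_eq_convex_hull:
  assumes "bij_betw idx {0..<2*m+6} (UNIV::'n::finite set)"
  shows "Pm m idx = convex hull (indvecs (m+1) \<union> wvecs)"
proof -
  have surj: "idx ` {0..<2*m+6} = UNIV" using assms by (simp add: bij_betw_def)
  have "{wv idx i j | i j. i < j \<and> j < 2*m+6}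
      = {wv idx i j | i j. i < j \<and> i \<in> {0..<2*m+6} \<and> j \<in> {0..<2*m+6}}"
    by force
  then show ?thesis
    unfolding Pm_def vS_set_eq[OF assms order_refl] wv_set_eq[OF assms order_refl] surj
    by (simp add: indvecs_def wvecs_def)
qed

lemma PI_eq_convex_hull:
  assumes "bij_betw idx {0..<2*m+6} (UNIV::'n::finite set)"
  shows "PI m idx = convex hull (indvecs (m+1))"
proof -
  have surj: "idx ` {0..<2*m+6} = UNIV" using assms by (simp add: bij_betw_def)
  show ?thesis unfolding PI_def vS_set_eq[OF assms order_refl] surj by (simp add: indvecs_def)
qed

lemma PII_generators_subset_PII:
  assumes bij: "bij_betw idx {0..<2*m+6} (UNIV::'n::finite set)"
  shows "PII_generators m (idx 0) \<subseteq> PII m idx"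
proof -
  have "{1..<2*m+6} = {0..<2*m+6} - {0}" by auto
  then have "idx ` {1..<2*m+6} = - {idx 0}" using bij_image_diff_eq_Compl[OF bij, of "{0}"] by simp
  moreover have "{1..<2*m+6} \<subseteq> {0..<2*m+6}" by auto
  ultimately have vs: "{indvec B | B. card B = m+1 \<and> idx 0 \<notin> B}
      \<subseteq> {vS idx S | S. S \<subseteq> {1..<2*m+6} \<and> card S = m+1}"
    using vS_set_eq[OF bij, of "{1..<2*m+6}" "m+1"] by auto
  have "wvec (idx 0) q \<in> {wv idx 0 j | j. 1 \<le> j \<and> j < 2*m+6}" if "q \<noteq> idx 0" for q
  proof -
    have "q \<in> idx ` {0..<2*m+6}" using bij by (simp add: bij_betw_def)
    then obtain j where j: "j < 2*m+6" "q = idx j" by auto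
    with that have "j \<noteq> 0" by (metis)
    with j show ?thesis by (auto simp: wv_eq_wvec)
  qed
  then have ws: "{wvec (idx 0) q | q. q \<noteq> idx 0} \<subseteq> {wv idx 0 j | j. 1 \<le> j \<and> j < 2*m+6}"
    by blast
  have "PII_generators m (idx 0) \<subseteq> {vS idx S | S. S \<subseteq> {1..<2*m+6} \<and> card S = m+1}
      \<union> {wv idx 0 j | j. 1 \<le> j \<and> j < 2*m+6}"
    using vs ws unfolding PII_generators_def by blast
  also have "\<dots> \<subseteq> PII m idx" unfolding PII_def by (rule hull_subset)
  finally show ?thesis .
qed

lemma PIII_generators_subset_PIII:
  assumes bij: "bij_betw idx {0..<2*m+6} (UNIV::'n::finite set)"
  shows "PIII_generators m (idx ` {0,1,2}) \<subseteq> PIII m idx"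
proof -
  have "{3..<2*m+6} = {0..<2*m+6} - {0,1,2}" "{0,1,2} \<subseteq> {0..<2*m+6}" by auto
  then have "idx ` {3..<2*m+6} = - idx ` {0,1,2}" using bij_image_diff_eq_Compl[OF bij] by simp
  moreover have "{3..<2*m+6} \<subseteq> {0..<2*m+6}" by auto
  ultimately have vs: "{indvec B | B. card B = m+1 \<and> B \<inter> idx ` {0,1,2} = {}}
      \<subseteq> {vS idx S | S. S \<subseteq> {3..<2*m+6} \<and> card S = m+1}"
    using vS_set_eq[OF bij, of "{3..<2*m+6}" "m+1"] by auto
  have "{wv idx i j | i j. i < j \<and> j \<le> 2} = {wv idx i j | i j. i < j \<and> i \<in> {0,1,2} \<and> j \<in> {0,1,2}}"
    by force
  then have ws: "{wvec p q | p q. p \<noteq> q \<and> p \<in> idx ` {0,1,2} \<and> q \<in> idx ` {0,1,2}}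
      = {wv idx i j | i j. i < j \<and> j \<le> 2}"
    using wv_set_eq[OF bij \<open>{0,1,2} \<subseteq> {0..<2*m+6}\<close>] by simp
  have "PIII_generators m (idx ` {0,1,2}) \<subseteq> {vS idx S | S. S \<subseteq> {3..<2*m+6} \<and> card S = m+1}
      \<union> {wv idx i j | i j. i < j \<and> j \<le> 2}"
    using vs ws unfolding PIII_generators_def by blast
  also have "\<dots> \<subseteq> PIII m idx" unfolding PIII_def by (rule hull_subset)
  finally show ?thesis .
qed

lemma PII_subset_Pm: "PII m idx \<subseteq> Pm m idx"
proof -
  have "{wv idx 0 j | j. 1 \<le> j \<and> j < 2*m+6} \<subseteq> {wv idx i j | i j. i < j \<and> j < 2*m+6}"
    by force
  moreover have "{vS idx S | S. S \<subseteq> {1..<2*m+6} \<and> card S = m+1}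
      \<subseteq> {vS idx S | S. S \<subseteq> {0..<2*m+6} \<and> card S = m+1}"
    by force
  ultimately show ?thesis unfolding PII_def Pm_def by (intro hull_mono Un_mono)
qed

lemma PIII_subset_Pm: "PIII m idx \<subseteq> Pm m idx"
proof -
  have "{wv idx i j | i j. i < j \<and> j \<le> 2} \<subseteq> {wv idx i j | i j. i < j \<and> j < 2*m+6}"
    by force
  moreover have "{vS idx S | S. S \<subseteq> {3..<2*m+6} \<and> card S = m+1}
      \<subseteq> {vS idx S | S. S \<subseteq> {0..<2*m+6} \<and> card S = m+1}"
    by force
  ultimately show ?thesis unfolding PIII_def Pm_def by (intro hull_mono Un_mono)
qed

lemma coordperm_Pm_subset:
  assumes bij: "bij_betw idx {0..<2*m+6} (UNIV::'n::finite set)" and \<sigma>: "\<sigma> permutes UNIV"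
  shows "coordperm \<sigma> ` Pm m idx \<subseteq> Pm m idx"
proof -
  have "inj \<sigma>" using permutes_inj[OF \<sigma>] .
  then have "coordperm \<sigma> ` indvecs (m+1) \<subseteq> indvecs (m+1)"
    by (auto simp: indvecs_def coordperm_indvec[OF \<sigma>] card_image inj_on_subset)
  moreover have "coordperm \<sigma> (wvec p q) \<in> wvecs" if "p \<noteq> q" for p q
  proof -
    have "\<sigma> p \<noteq> \<sigma> q" using that \<open>inj \<sigma>\<close> by (simp add: inj_eq)
    then show ?thesis unfolding wvecs_def coordperm_wvec[OF \<sigma>] by blast
  qed
  then have "coordperm \<sigma> ` wvecs \<subseteq> wvecs" by (auto simp: wvecs_def)
  ultimately have "coordperm \<sigma> ` (indvecs (m+1) \<union> wvecs) \<subseteq> indvecs (m+1) \<union> wvecs"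
    by blast
  then show ?thesis
    unfolding Pm_eq_convex_hull[OF bij] convex_hull_linear_image[OF linear_coordperm]
    by (rule hull_mono)
qed

lemma sum_coords_Pm:
  assumes card: "CARD('n) = 2*m+6" and bij: "bij_betw idx {0..<2*m+6} (UNIV::'n::finite set)"
    and "x \<in> Pm m idx"
  shows "sum (($) x) UNIV = m + 1"
proof -
  let ?one = "(\<chi> k. 1) :: real ^ 'n"
  have "indvecs (m+1) \<union> wvecs \<subseteq> {y. ?one \<bullet> y = m + 1}"
    using card by (auto simp: indvecs_def wvecs_def inner_indvec inner_wvec pair_value_def)
  then have "Pm m idx \<subseteq> {y. ?one \<bullet> y = m + 1}"
    unfolding Pm_eq_convex_hull[OF bij] by (rule hull_minimal) (rule convex_hyperplane)
  then show ?thesis using assms(3) by (auto simp: inner_vec_def)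
qed

section \<open>Functionals attaining their maximum on a proper face\<close>

locale supporting_functional =
  fixes m :: nat and \<alpha> :: "'n::finite \<Rightarrow> real" and b :: real
  assumes card_coords: "CARD('n) = 2*m+6"
    and sum_le: "card B = m+1 \<Longrightarrow> sum \<alpha> B \<le> b"
    and pair_value_le: "p \<noteq> q \<Longrightarrow> pair_value \<alpha> p q \<le> b"
    and nonconstant: "\<exists>k l. \<alpha> k \<noteq> \<alpha> l"
begin

definition minset :: "'n set" where
  "minset = {k. \<forall>l. \<alpha> k \<le> \<alpha> l}"

lemma minset_nonempty: "minset \<noteq> {}"
proof -
  have "Min (range \<alpha>) \<in> range \<alpha>" by (rule Min_in) auto
  then obtain k where "\<alpha> k = Min (range \<alpha>)" by (metis rangeE)
  then have "k \<in> minset" by (simp add: minset_def)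
  then show ?thesis by blast
qed

lemma minset_eq: "z \<in> minset \<Longrightarrow> z' \<in> minset \<Longrightarrow> \<alpha> z = \<alpha> z'"
  by (simp add: minset_def order_antisym)

lemma tight_vertex_exchange:
  assumes B: "card B = m+1" "sum \<alpha> B = b" and "k \<in> B" "l \<notin> B"
  shows "\<alpha> l \<le> \<alpha> k"
proof -
  have "card (insert l (B - {k})) = m+1"
    using assms by (simp add: card_Suc_Diff1)
  then have "sum \<alpha> (insert l (B - {k})) \<le> b" by (rule sum_le)
  moreover have "sum \<alpha> (insert l (B - {k})) = \<alpha> l + (sum \<alpha> B - \<alpha> k)"
    using assms by (simp add: sum_diff1)
  ultimately show ?thesis using B by simp
qed

lemma disjoint_tight_vertices_level:
  assumes "card B1 = m+1" "sum \<alpha> B1 = b" "card B2 = m+1" "sum \<alpha> B2 = b"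
    and "B1 \<inter> B2 = {}" "k \<in> B1" "l \<in> B2"
  shows "\<alpha> k = \<alpha> l"
  using tight_vertex_exchange[OF assms(1,2,6)] tight_vertex_exchange[OF assms(3,4,7)] assms(5-7) by (meson disjoint_iff order_antisym)

lemma card_mult_min_less_sum:
  assumes "z \<in> minset"
  shows "CARD('n) * \<alpha> z < sum \<alpha> UNIV"
proof -
  obtain k where "\<alpha> k \<noteq> \<alpha> z" using nonconstant by metis
  then have "\<alpha> z < \<alpha> k" using assms by (auto simp: minset_def order_le_less)
  then show ?thesis
    using sum_strict_mono_ex1[of UNIV "\<lambda>_. \<alpha> z" \<alpha>] assms by (auto simp: minset_def)
qed

context
  fixes p0 q0 :: 'n
  assumes tight_pair: "p0 \<noteq> q0" "pair_value \<alpha> p0 q0 = b"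
begin

lemma tight_pair_sum_le: "p \<noteq> q \<Longrightarrow> \<alpha> p0 + \<alpha> q0 \<le> \<alpha> p + \<alpha> q"
  using pair_value_le[of p q] tight_pair by (simp add: pair_value_def)

text \<open>The tight pair gives b \<le> sum \<alpha> UNIV / 2 - 2 min \<alpha>. If the tight vertex contained a
  minimal coordinate, exchange would make \<alpha> minimal off B, and together this gives
  sum \<alpha> UNIV \<le> CARD('n) min \<alpha>, impossible for nonconstant \<alpha>.\<close>
lemma tight_vertex_disjoint_minset:
  assumes B: "card B = m+1" "sum \<alpha> B = b"
  shows "B \<inter> minset = {}"
proof (rule ccontr)
  assume "B \<inter> minset \<noteq> {}"
  then obtain z where z: "z \<in> B" "z \<in> minset" by blast
  have "\<alpha> l = \<alpha> z" if "l \<notin> B" for l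
    using tight_vertex_exchange[OF B z(1) that] z(2) by (simp add: minset_def order_antisym)
  then have "sum \<alpha> (-B) = sum (\<lambda>_. \<alpha> z) (-B)" by (intro sum.cong) auto
  also have "\<dots> = (real m + 5) * \<alpha> z" using card_coords B(1) by (simp add: card_Compl_finite)
  finally have "sum \<alpha> UNIV = b + (real m + 5) * \<alpha> z" using B(2) sum_UNIV_split[of \<alpha> B] by simp
  moreover have "\<alpha> z \<le> \<alpha> p0" "\<alpha> z \<le> \<alpha> q0" using z(2) by (auto simp: minset_def)
  then have "b \<le> sum \<alpha> UNIV / 2 - 2 * \<alpha> z" using tight_pair by (simp add: pair_value_def)
  ultimately have "sum \<alpha> UNIV \<le> (2 * real m + 6) * \<alpha> z" by (simp add: algebra_simps)
  with card_mult_min_less_sum[OF z(2)] card_coords show False by simp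
qed

lemma tight_pair_meets_minset:
  assumes "p \<noteq> q" "pair_value \<alpha> p q = b"
  shows "p \<in> minset \<or> q \<in> minset"
proof -
  obtain z where z: "z \<in> minset" using minset_nonempty by blast
  have same: "\<alpha> p + \<alpha> q = \<alpha> p0 + \<alpha> q0" using assms tight_pair by (simp add: pair_value_def)
  show ?thesis
  proof (cases "z = p \<or> z = q")
    case True
    then show ?thesis using z by blast
  next
    case False
    then have "\<alpha> p \<le> \<alpha> z" using tight_pair_sum_le[of z q] same by simp
    then have "p \<in> minset" using z by (auto simp: minset_def intro: order_trans)
    then show ?thesis ..
  qed
qed

lemma tight_pair_subset_minset:
  assumes z: "z1 \<in> minset" "z2 \<in> minset" "z1 \<noteq> z2" and "p \<noteq> q" "pair_value \<alpha> p q = b"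
  shows "p \<in> minset \<and> q \<in> minset"
proof -
  have "\<alpha> p + \<alpha> q \<le> \<alpha> z1 + \<alpha> z2"
    using tight_pair_sum_le[OF z(3)] assms(4,5) tight_pair by (simp add: pair_value_def)
  moreover have "\<alpha> z1 \<le> \<alpha> p" "\<alpha> z1 \<le> \<alpha> q" using z(1) by (simp_all add: minset_def)
  moreover have "\<alpha> z2 = \<alpha> z1" using minset_eq[OF z(2,1)] .
  ultimately have "\<alpha> p = \<alpha> z1" "\<alpha> q = \<alpha> z1" by linarith+
  then show ?thesis using z(1) by (simp add: minset_def)
qed

lemma supporting_value_eq:
  assumes "z1 \<in> minset" "z2 \<in> minset" "z1 \<noteq> z2"
  shows "b = pair_value \<alpha> z1 z2"
proof -
  have "p0 \<in> minset" "q0 \<in> minset" using tight_pair_subset_minset[OF assms tight_pair] by auto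
  then have "\<alpha> p0 = \<alpha> z1" "\<alpha> q0 = \<alpha> z2" using assms minset_eq by blast+
  then show ?thesis using tight_pair by (simp add: pair_value_def)
qed

text \<open>The two halves of the complement of R have values adding up to
  sum \<alpha> UNIV - 4 min \<alpha> = 2b, so both halves are tight.\<close>
lemma four_minimizers_complement_tight:
  assumes R: "R \<subseteq> minset" "card R = 4"
  obtains B1 B2 where "-R = B1 \<union> B2" "B1 \<inter> B2 = {}" "card B1 = m+1" "card B2 = m+1"
    "sum \<alpha> B1 = b" "sum \<alpha> B2 = b"
proof -
  obtain S where "S \<subseteq> R" "card S = 2" using obtain_subset_with_card_n[of 2 R] R(2) by auto
  then obtain z1 z2 where z: "z1 \<in> R" "z2 \<in> R" "z1 \<noteq> z2" by (auto simp: card_2_iff)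
  define \<mu> where "\<mu> = \<alpha> z1"
  have on_R: "\<alpha> k = \<mu>" if "k \<in> R" for k
    using minset_eq[of k z1] that z(1) R(1) unfolding \<mu>_def by blast
  have b_eq: "b = sum \<alpha> UNIV / 2 - 2 * \<mu>"
    using supporting_value_eq[of z1 z2] z R(1) on_R by (auto simp: pair_value_def)
  have "card (-R) = 2*m+2" using R(2) card_coords by (simp add: card_Compl_finite)
  then obtain B1 where B1: "B1 \<subseteq> -R" "card B1 = m+1"
    using obtain_subset_with_card_n[of "m+1" "-R"] by auto
  define B2 where "B2 = -R - B1"
  have B2: "-R = B1 \<union> B2" "B1 \<inter> B2 = {}" "card B2 = m+1"
    unfolding B2_def using B1 \<open>card (-R) = 2*m+2\<close> by (auto simp: card_Diff_subset)
  have "sum \<alpha> UNIV = sum \<alpha> R + sum \<alpha> B1 + sum \<alpha> B2"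
    using sum_UNIV_split[of \<alpha> R] sum.subset_diff[OF B1(1), of \<alpha>] unfolding B2_def by simp
  moreover have "sum \<alpha> R = 4 * \<mu>" using on_R R(2) by simp
  ultimately have "sum \<alpha> B1 = b" "sum \<alpha> B2 = b"
    using sum_le[OF B1(2)] sum_le[OF B2(3)] b_eq by linarith+
  from B2(1,2) B1(2) B2(3) this show ?thesis by (rule that)
qed

lemma four_minimizers_two_valued:
  assumes R: "R \<subseteq> minset" "card R = 4"
  obtains \<mu> t where "\<forall>k\<in>R. \<alpha> k = \<mu>" "\<forall>k. k \<notin> R \<longrightarrow> \<alpha> k = t" "\<mu> < t" "b = (real m + 1) * t"
proof -
  obtain B1 B2 where B: "-R = B1 \<union> B2" "B1 \<inter> B2 = {}" "card B1 = m+1" "card B2 = m+1"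
    and tight: "sum \<alpha> B1 = b" "sum \<alpha> B2 = b"
    using four_minimizers_complement_tight[OF R] .
  have level: "\<alpha> k = \<alpha> l" if "k \<in> B1" "l \<in> B2" for k l
    using disjoint_tight_vertices_level[OF B(3) tight(1) B(4) tight(2) B(2) that] .
  have "R \<noteq> {}" "B1 \<noteq> {}" "B2 \<noteq> {}" using R(2) B(3,4) by auto
  then obtain z c c' where z: "z \<in> R" and c: "c \<in> B1" and c': "c' \<in> B2" by blast
  define \<mu> where "\<mu> = \<alpha> z"
  define t where "t = \<alpha> c'"
  have on_R: "\<forall>k\<in>R. \<alpha> k = \<mu>" using minset_eq z R(1) unfolding \<mu>_def by blast
  have off_R: "\<forall>k. k \<notin> R \<longrightarrow> \<alpha> k = t"
  proof (intro allI impI)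
    fix k assume "k \<notin> R"
    then consider "k \<in> B1" | "k \<in> B2" using B(1) by blast
    then show "\<alpha> k = t"
    proof cases
      case 1
      then show ?thesis using level[OF _ c'] unfolding t_def by blast
    next
      case 2
      then show ?thesis using level[OF c] level[OF c c'] unfolding t_def by simp
    qed
  qed
  have "sum \<alpha> B1 = sum (\<lambda>_. t) B1" using off_R B(1) by (intro sum.cong) auto
  then have b_eq: "b = (real m + 1) * t" using tight(1) B(3) by simp
  have "\<mu> < t"
  proof -
    have "\<mu> \<le> t" using R(1) z by (auto simp: \<mu>_def t_def minset_def)
    moreover have "\<mu> \<noteq> t"
    proof
      assume "\<mu> = t"
      then have "\<alpha> k = t" for k using on_R off_R by (cases "k \<in> R") simp_all
      then show False using nonconstant by simp
    qed
    ultimately show ?thesis by simp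
  qed
  from on_R off_R this b_eq show ?thesis by (rule that)
qed

lemma tight_pairs_share_minimizer:
  assumes "card minset \<le> 2"
  obtains z where "z \<in> minset" "\<And>p q. p \<noteq> q \<Longrightarrow> pair_value \<alpha> p q = b \<Longrightarrow> p = z \<or> q = z"
proof -
  have "card minset \<noteq> 0" using minset_nonempty by simp
  then consider "card minset = 1" | "card minset = 2" using assms by linarith
  then show ?thesis
  proof cases
    case 1
    then obtain z where z: "minset = {z}" by (rule card_1_singletonE)
    have "p = z \<or> q = z" if pq: "p \<noteq> q" "pair_value \<alpha> p q = b" for p q
      using tight_pair_meets_minset[OF pq] z by simp
    then show ?thesis using z by (intro that[of z]) simp_all
  next
    case 2
    then obtain z1 z2 where z: "minset = {z1, z2}" "z1 \<noteq> z2" by (meson card_2_iff)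
    have "p = z1 \<or> q = z1" if pq: "p \<noteq> q" "pair_value \<alpha> p q = b" for p q
      using tight_pair_subset_minset[of z1 z2 p q] z pq by auto
    then show ?thesis using z by (intro that[of z1]) simp_all
  qed
qed

lemma tight_points_subset_PIII_generators:
  assumes "card minset = 3"
  shows "tight_points m \<alpha> b \<subseteq> PIII_generators m minset"
proof
  obtain z1 z2 z3 where z: "minset = {z1, z2, z3}" "z1 \<noteq> z2"
    using assms by (auto simp: card_3_iff)
  fix x assume "x \<in> tight_points m \<alpha> b"
  then consider B where "x = indvec B" "card B = m+1" "sum \<alpha> B = b"
    | p q where "x = wvec p q" "p \<noteq> q" "pair_value \<alpha> p q = b"
    unfolding tight_points_def by blast
  then show "x \<in> PIII_generators m minset"
  proof cases
    case 1
    then have "B \<inter> minset = {}" using tight_vertex_disjoint_minset by simp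
    then show ?thesis using 1 unfolding PIII_generators_def by blast
  next
    case 2
    then have "p \<in> minset" "q \<in> minset" using tight_pair_subset_minset[of z1 z2 p q] z by auto
    then show ?thesis using 2 unfolding PIII_generators_def by blast
  qed
qed

lemma tight_points_subset_PII_generators:
  assumes "card minset \<le> 2"
  obtains z where "tight_points m \<alpha> b \<subseteq> PII_generators m z"
proof -
  obtain z where z: "z \<in> minset" and meets: "\<And>p q. p \<noteq> q \<Longrightarrow> pair_value \<alpha> p q = b \<Longrightarrow> p = z \<or> q = z"
    using tight_pairs_share_minimizer[OF assms] by metis
  have "x \<in> PII_generators m z" if x: "x \<in> tight_points m \<alpha> b" for x
  proof -
    consider B where "x = indvec B" "card B = m+1" "sum \<alpha> B = b"
      | p q where "x = wvec p q" "p \<noteq> q" "pair_value \<alpha> p q = b"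
      using x unfolding tight_points_def by blast
    then show ?thesis
    proof cases
      case 1
      then have "z \<notin> B" using tight_vertex_disjoint_minset z by blast
      then show ?thesis using 1 unfolding PII_generators_def by blast
    next
      case 2
      then have "x = wvec z q \<and> q \<noteq> z \<or> x = wvec z p \<and> p \<noteq> z"
        using meets[of p q] wvec_commute by metis
      then show ?thesis unfolding PII_generators_def by blast
    qed
  qed
  then show ?thesis by (intro that[of z]) blast
qed

end

end

lemma tight_points_subset_indvecs:
  assumes "\<And>p q. p \<noteq> q \<Longrightarrow> pair_value \<alpha> p q \<noteq> b"
  shows "tight_points m \<alpha> b \<subseteq> indvecs (m+1)"
  using assms by (auto simp: tight_points_def indvecs_def)

section \<open>Faces of the polytopes\<close>

lemma face_of_subpolytope:
  assumes "F face_of P" "F = convex hull T" "T \<subseteq> Q" "convex Q" "Q \<subseteq> P"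
  shows "F face_of Q"
proof -
  have "F \<subseteq> Q" using assms(2-4) by (simp add: hull_minimal)
  then show ?thesis using face_of_subset assms(1,5) by blast
qed

lemma face_of_convex_hull_exposed:
  fixes G :: "'a::euclidean_space set"
  assumes "finite G" and face: "F face_of convex hull G"
  obtains a b where "convex hull G \<subseteq> {x. a \<bullet> x \<le> b}" "F = convex hull G \<inter> {x. a \<bullet> x = b}"
    "F = convex hull (G \<inter> {x. a \<bullet> x = b})"
proof -
  have "polytope (convex hull G)" unfolding polytope_def using assms(1) by blast
  then have "F exposed_face_of convex hull G"
    using exposed_face_of_polyhedron[OF polytope_imp_polyhedron] face by blast
  then have "\<exists>a b. convex hull G \<subseteq> {x. a \<bullet> x \<le> b} \<and> F = convex hull G \<inter> {x. a \<bullet> x = b}"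
    unfolding exposed_face_of_def by (rule conjunct2)
  then obtain a b where ab: "convex hull G \<subseteq> {x. a \<bullet> x \<le> b}" "F = convex hull G \<inter> {x. a \<bullet> x = b}"
    by blast
  obtain S where S: "S \<subseteq> G" "F = convex hull S"
    using face_of_convex_hull_subset[OF finite_imp_compact[OF assms(1)] face] by blast
  have "S \<subseteq> F" unfolding S(2) by (rule hull_subset)
  then have "S \<subseteq> G \<inter> {x. a \<bullet> x = b}" using S(1) ab(2) by blast
  then have "F \<subseteq> convex hull (G \<inter> {x. a \<bullet> x = b})" unfolding S(2) by (rule hull_mono)
  moreover have "G \<inter> {x. a \<bullet> x = b} \<subseteq> F" using ab(2) hull_subset[of G convex] by blast
  then have "convex hull (G \<inter> {x. a \<bullet> x = b}) \<subseteq> F"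
    using face_of_imp_convex[OF face] by (rule hull_minimal)
  ultimately have "F = convex hull (G \<inter> {x. a \<bullet> x = b})" by (rule equalityI)
  with ab show ?thesis by (rule that)
qed

lemma generators_inter_hyperplane:
  "(indvecs (m+1) \<union> wvecs) \<inter> {x. a \<bullet> x = b} = tight_points m (($) a) b"
proof -
  have "indvecs (m+1) \<inter> {x. a \<bullet> x = b} = {indvec B | B. card B = m+1 \<and> sum (($) a) B = b}"
    by (auto simp: indvecs_def inner_indvec)
  moreover have "wvecs \<inter> {x. a \<bullet> x = b} = {wvec p q | p q. p \<noteq> q \<and> pair_value (($) a) p q = b}"
    unfolding wvecs_def by (force simp: inner_wvec)
  ultimately show ?thesis by (simp add: tight_points_def Int_Un_distrib2)
qed

lemma proper_face_of_Pm_exposed: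
  assumes card: "CARD('n) = 2*m+6" and bij: "bij_betw idx {0..<2*m+6} (UNIV::'n::finite set)"
    and face: "F face_of Pm m idx" and "F \<noteq> {}" "F \<noteq> Pm m idx"
  obtains a b where "supporting_functional m (($) a) b"
    "F = Pm m idx \<inter> {x. a \<bullet> x = b}" "F = convex hull (tight_points m (($) a) b)"
proof -
  let ?G = "indvecs (m+1) \<union> (wvecs :: (real ^ 'n) set)"
  have Pm_G: "Pm m idx = convex hull ?G" by (rule Pm_eq_convex_hull[OF bij])
  have "finite ?G" using finite_indvecs finite_wvecs by blast
  moreover have "F face_of convex hull ?G" using face unfolding Pm_G .
  ultimately obtain a b where le: "convex hull ?G \<subseteq> {x. a \<bullet> x \<le> b}"
    and F_section: "F = convex hull ?G \<inter> {x. a \<bullet> x = b}" and hull: "F = convex hull (?G \<inter> {x. a \<bullet> x = b})"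
    by (rule face_of_convex_hull_exposed)
  have G_le: "a \<bullet> g \<le> b" if "g \<in> ?G" for g
    using le hull_subset[of ?G convex] that by blast
  have "supporting_functional m (($) a) b"
  proof
    show "CARD('n) = 2*m+6" by (rule card)
    show "sum (($) a) B \<le> b" if "card B = m+1" for B
    proof -
      have "indvec B \<in> ?G" using that unfolding indvecs_def by blast
      then have "a \<bullet> indvec B \<le> b" by (rule G_le)
      then show ?thesis by (simp add: inner_indvec)
    qed
    show "pair_value (($) a) p q \<le> b" if "p \<noteq> q" for p q
    proof -
      have "wvec p q \<in> ?G" using that unfolding wvecs_def by blast
      then have "a \<bullet> wvec p q \<le> b" by (rule G_le)
      then show ?thesis using that by (simp add: inner_wvec)
    qed
    show "\<exists>k l. a $ k \<noteq> a $ l"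
    proof (rule ccontr)
      assume "\<not> (\<exists>k l. a $ k \<noteq> a $ l)"
      then obtain c where c: "\<And>k. a $ k = c" by blast
      have Pm_value: "a \<bullet> x = c * (real m + 1)" if "x \<in> Pm m idx" for x
        using sum_coords_Pm[OF card bij that] by (simp add: inner_vec_def c sum_distrib_left[symmetric])
      obtain y where "y \<in> F" using \<open>F \<noteq> {}\<close> by blast
      then have "y \<in> Pm m idx" "a \<bullet> y = b" using F_section unfolding Pm_G by auto
      then have "Pm m idx \<subseteq> {x. a \<bullet> x = b}" using Pm_value by auto
      then have "F = Pm m idx" using F_section unfolding Pm_G by blast
      with \<open>F \<noteq> Pm m idx\<close> show False ..
    qed
  qed
  from this F_section[folded Pm_G] hull[unfolded generators_inter_hyperplane] show ?thesis by (rule that)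
qed

lemma face_of_PI:
  assumes bij: "bij_betw idx {0..<2*m+6} (UNIV::'n::finite set)"
    and "F face_of Pm m idx" "F = convex hull T" "T \<subseteq> indvecs (m+1)"
  shows "F face_of PI m idx"
proof (rule face_of_subpolytope[OF assms(2,3)])
  show "T \<subseteq> PI m idx"
    using assms(4) hull_subset[of "indvecs (m+1)" convex] unfolding PI_eq_convex_hull[OF bij] by blast
  show "convex (PI m idx)" unfolding PI_def by simp
  show "PI m idx \<subseteq> Pm m idx"
    unfolding PI_eq_convex_hull[OF bij] Pm_eq_convex_hull[OF bij] by (rule hull_mono) (rule Un_upper1)
qed

lemma face_of_coordperm_image:
  assumes bij: "bij_betw idx {0..<2*m+6} (UNIV::'n::finite set)"
    and "F face_of Pm m idx" "F = convex hull T" and \<tau>: "\<tau> permutes UNIV"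
    and "coordperm \<tau> ` T \<subseteq> Q" "convex Q" "Q \<subseteq> Pm m idx"
  shows "F face_of coordperm (inv \<tau>) ` Q"
proof (rule face_of_subpolytope[OF assms(2,3)])
  show "T \<subseteq> coordperm (inv \<tau>) ` Q"
  proof
    fix x assume "x \<in> T"
    then have "coordperm \<tau> x \<in> Q" using assms(5) by blast
    then show "x \<in> coordperm (inv \<tau>) ` Q"
      using image_eqI[of x "coordperm (inv \<tau>)" "coordperm \<tau> x" Q] coordperm_inv_cancel[OF \<tau>, of x] by simp
  qed
  show "convex (coordperm (inv \<tau>) ` Q)" using assms(6) by (rule convex_linear_image[OF linear_coordperm])
  show "coordperm (inv \<tau>) ` Q \<subseteq> Pm m idx"
    using image_mono[OF assms(7)] coordperm_Pm_subset[OF bij permutes_inv[OF \<tau>]] by (rule order_trans)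
qed

lemma face_of_coordperm_PII:
  assumes bij: "bij_betw idx {0..<2*m+6} (UNIV::'n::finite set)"
    and face: "F face_of Pm m idx" and hull: "F = convex hull T" and T: "T \<subseteq> PII_generators m z"
  shows "\<exists>\<sigma>. \<sigma> permutes UNIV \<and> F face_of coordperm \<sigma> ` PII m idx"
proof -
  obtain \<tau> where \<tau>: "\<tau> permutes UNIV" "\<tau> ` {z} = {idx 0}"
    using exists_permutes_image_eq[of "{z}" "{idx 0}"] by auto
  have "coordperm \<tau> ` T \<subseteq> coordperm \<tau> ` PII_generators m z" using T by (rule image_mono)
  also have "\<dots> \<subseteq> PII_generators m (idx 0)" using coordperm_PII_generators[OF \<tau>(1), of m z] \<tau>(2) by simp
  also have "\<dots> \<subseteq> PII m idx" by (rule PII_generators_subset_PII[OF bij])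
  finally have "F face_of coordperm (inv \<tau>) ` PII m idx"
    using PII_subset_Pm unfolding PII_def by (intro face_of_coordperm_image[OF bij face hull \<tau>(1)]) simp_all
  then show ?thesis using permutes_inv[OF \<tau>(1)] by blast
qed

lemma face_of_coordperm_PIII:
  assumes bij: "bij_betw idx {0..<2*m+6} (UNIV::'n::finite set)"
    and face: "F face_of Pm m idx" and hull: "F = convex hull T"
    and "card Z = 3" and T: "T \<subseteq> PIII_generators m Z"
  shows "\<exists>\<sigma>. \<sigma> permutes UNIV \<and> F face_of coordperm \<sigma> ` PIII m idx"
proof -
  have "inj_on idx {0,1,2}" using bij_betw_imp_inj_on[OF bij] by (rule inj_on_subset) auto
  then have "card Z = card (idx ` {0,1,2})" using assms(4) by (simp add: card_image)
  then obtain \<tau> where \<tau>: "\<tau> permutes UNIV" "\<tau> ` Z = idx ` {0,1,2}"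
    using exists_permutes_image_eq by blast
  have "coordperm \<tau> ` T \<subseteq> coordperm \<tau> ` PIII_generators m Z" using T by (rule image_mono)
  also have "\<dots> \<subseteq> PIII_generators m (idx ` {0,1,2})" using coordperm_PIII_generators[OF \<tau>(1), of m Z] \<tau>(2) by simp
  also have "\<dots> \<subseteq> PIII m idx" by (rule PIII_generators_subset_PIII[OF bij])
  finally have "F face_of coordperm (inv \<tau>) ` PIII m idx"
    using PIII_subset_Pm unfolding PIII_def by (intro face_of_coordperm_image[OF bij face hull \<tau>(1)]) simp_all
  then show ?thesis using permutes_inv[OF \<tau>(1)] by blast
qed

lemma Pm_section_eq_coordinate_sum_zero:
  assumes card: "CARD('n) = 2*m+6" and bij: "bij_betw idx {0..<2*m+6} (UNIV::'n::finite set)"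
    and "\<forall>k\<in>R. a $ k = \<mu>" "\<forall>k. k \<notin> R \<longrightarrow> a $ k = t" "\<mu> < t" "b = (real m + 1) * t"
  shows "Pm m idx \<inter> {x. a \<bullet> x = b} = {x \<in> Pm m idx. sum (($) x) R = 0}"
proof -
  have "a \<bullet> x = b \<longleftrightarrow> sum (($) x) R = 0" if x: "x \<in> Pm m idx" for x
  proof -
    have "a \<bullet> x = (\<Sum>k\<in>R. a $ k * x $ k) + (\<Sum>k\<in>-R. a $ k * x $ k)"
      unfolding inner_vec_def inner_real_def by (rule sum_UNIV_split)
    also have "\<dots> = \<mu> * sum (($) x) R + t * sum (($) x) (-R)"
      using assms(3,4) by (simp add: sum_distrib_left)
    finally have "a \<bullet> x = \<mu> * sum (($) x) R + t * sum (($) x) (-R)" .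
    moreover have "sum (($) x) (-R) = real m + 1 - sum (($) x) R"
      using sum_coords_Pm[OF card bij x] sum_UNIV_split[of "($) x" R] by simp
    ultimately have "a \<bullet> x = b + (\<mu> - t) * sum (($) x) R" using assms(6) by (simp add: algebra_simps)
    then show ?thesis using assms(5) by simp
  qed
  then show ?thesis by blast
qed

lemma coordperm_Facet0:
  assumes bij: "bij_betw idx {0..<2*m+6} (UNIV::'n::finite set)" and "card R = 4"
  obtains \<sigma> where "\<sigma> permutes UNIV" "coordperm \<sigma> ` Facet0 m idx = {x \<in> Pm m idx. sum (($) x) R = 0}"
proof -
  let ?R0 = "idx ` {0,1,2,3}"
  have inj: "inj_on idx {0,1,2,3}" using bij by (rule inj_on_subset[OF bij_betw_imp_inj_on]) auto
  then have "card ?R0 = card R" using assms(2) by (simp add: card_image)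
  then obtain \<sigma> where \<sigma>: "\<sigma> permutes UNIV" "\<sigma> ` ?R0 = R" using exists_permutes_image_eq by blast
  have "sum (($) x) ?R0 = x $ idx 0 + x $ idx 1 + x $ idx 2 + x $ idx 3" for x :: "real ^ 'n"
    using inj by (simp add: sum.reindex)
  then have Facet0_eq: "Facet0 m idx = {x \<in> Pm m idx. sum (($) x) ?R0 = 0}"
    by (simp add: Facet0_def)
  have sums: "sum (($) (coordperm \<sigma> x)) R = sum (($) x) ?R0" for x
    using sum_coordperm_image[OF \<sigma>(1)] \<sigma>(2) by metis
  have "coordperm \<sigma> ` Facet0 m idx = {x \<in> Pm m idx. sum (($) x) R = 0}"
  proof (intro equalityI subsetI)
    fix y assume "y \<in> coordperm \<sigma> ` Facet0 m idx"
    then show "y \<in> {x \<in> Pm m idx. sum (($) x) R = 0}"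
      using coordperm_Pm_subset[OF bij \<sigma>(1)] sums unfolding Facet0_eq by auto
  next
    fix y assume y: "y \<in> {x \<in> Pm m idx. sum (($) x) R = 0}"
    define x where "x = coordperm (inv \<sigma>) y"
    have "y = coordperm \<sigma> x"
      using coordperm_inv_cancel[OF permutes_inv[OF \<sigma>(1)], of y] unfolding x_def permutes_inv_inv[OF \<sigma>(1)] ..
    moreover have "x \<in> Pm m idx" using y coordperm_Pm_subset[OF bij permutes_inv[OF \<sigma>(1)]] unfolding x_def by blast
    ultimately show "y \<in> coordperm \<sigma> ` Facet0 m idx" using y sums unfolding Facet0_eq by auto
  qed
  with \<sigma>(1) show ?thesis by (rule that)
qed

theorem lemma5p12:
  fixes m :: nat and idx :: "nat \<Rightarrow> 'n::finite"
  assumes "CARD('n) = 2*m+6"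
    and "bij_betw idx {0..<2*m+6} (UNIV::'n set)"
    and "F face_of Pm m idx"
    and "F \<noteq> Pm m idx"
    and "\<And>\<sigma>. \<sigma> permutes (UNIV::'n set) \<Longrightarrow> F \<noteq> coordperm \<sigma> ` Facet0 m idx"
  shows "F face_of PI m idx
     \<or> (\<exists>\<sigma>. \<sigma> permutes (UNIV::'n set) \<and> F face_of (coordperm \<sigma> ` PII m idx))
     \<or> (\<exists>\<sigma>. \<sigma> permutes (UNIV::'n set) \<and> F face_of (coordperm \<sigma> ` PIII m idx))"
proof (cases "F = {}")
  case True
  then show ?thesis by simp
next
  case False
  note bij = assms(2) and face = assms(3)
  obtain a b where sf: "supporting_functional m (($) a) b" and F_section: "F = Pm m idx \<inter> {x. a \<bullet> x = b}"
    and hull: "F = convex hull (tight_points m (($) a) b)"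
    using proper_face_of_Pm_exposed[OF assms(1-3) False assms(4)] .
  interpret supporting_functional m "($) a" b by (fact sf)
  show ?thesis
  proof (cases "\<exists>p q. p \<noteq> q \<and> pair_value (($) a) p q = b")
    case False
    then have "tight_points m (($) a) b \<subseteq> indvecs (m+1)" by (intro tight_points_subset_indvecs) blast
    then show ?thesis using face_of_PI[OF bij face hull] by blast
  next
    case True
    then obtain p0 q0 where tight: "p0 \<noteq> q0" "pair_value (($) a) p0 q0 = b" by blast
    consider "4 \<le> card minset" | "card minset = 3" | "card minset \<le> 2" by linarith
    then show ?thesis
    proof cases
      case 1
      then obtain R where R: "R \<subseteq> minset" "card R = 4" using obtain_subset_with_card_n[OF 1] by auto
      obtain \<mu> t where "\<forall>k\<in>R. a $ k = \<mu>" "\<forall>k. k \<notin> R \<longrightarrow> a $ k = t" "\<mu> < t" "b = (real m + 1) * t"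
        using four_minimizers_two_valued[OF tight R] .
      then have "F = {x \<in> Pm m idx. sum (($) x) R = 0}"
        using F_section Pm_section_eq_coordinate_sum_zero[OF assms(1,2)] by simp
      moreover obtain \<sigma> where "\<sigma> permutes UNIV"
        "coordperm \<sigma> ` Facet0 m idx = {x \<in> Pm m idx. sum (($) x) R = 0}"
        using coordperm_Facet0[OF bij R(2)] .
      ultimately show ?thesis using assms(5) by blast
    next
      case 2
      then have "tight_points m (($) a) b \<subseteq> PIII_generators m minset"
        by (rule tight_points_subset_PIII_generators[OF tight])
      then show ?thesis using face_of_coordperm_PIII[OF bij face hull 2] by blast
    next
      case 3
      then obtain z where "tight_points m (($) a) b \<subseteq> PII_generators m z"
        using tight_points_subset_PII_generators[OF tight] by blast
      then show ?thesis using face_of_coordperm_PII[OF bij face hull] by blast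
    qed
  qed
qed

end
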